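(* Let $m$ be a positive integer and $\gamma\in C^m(\mathbb{R},\mathbb{R}^3)$. For every $p\in\mathbb{H}$ and all $a,b\in\mathbb{R}$, $$A(p*\gamma;a,b)=A(\gamma;a,b)\quad\text{and}\quad V(p*\gamma;a,b)=V(\gamma;a,b),$$ where $p*\gamma$ is the curve $t\mapsto p*\gamma(t)$.
   Context: $\mathbb{H}$ is $\mathbb{R}^3$ with group law $(x,y,z)*(x',y',z')=(x+x',\,y+y',\,z+z'+2(yx'-xy'))$. $C^m(\mathbb{R},\mathbb{R}^3)$: curves whose components are $m$-times continuously differentiable with bounded $m$th derivative. For $\gamma=(f,g,h)\in C^m(\mathbb{R},\mathbb{R}^3)$ and $a\in\mathbb{R}$, $T_af(x)=\sum_{k=0}^m\frac{f^{(k)}(a)}{k!}(x-a)^k$ (similarly $T_ag$), and for $a,b\in\mathbb{R}$: $A(\gamma;a,b)= h(b)-h(a)-2\int_a^b\big((T_af)'T_ag-(T_ag)'T_af\big) + 2f(a)(g(b)-T_ag(b)) - 2g(a)(f(b)-T_af(b))$, $V(\gamma;a,b)=(b-a)^{2m}+(b-a)^m\int_a^b(|(T_af)'|+|(T_ag)'|)$. *)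

theory Defs
  imports "HOL-Analysis.Analysis"
begin

definition heis_mult :: "real \<times> real \<times> real \<Rightarrow> real \<times> real \<times> real \<Rightarrow> real \<times> real \<times> real" where
  "heis_mult p q = (case p of (x, y, z) \<Rightarrow> case q of (x', y', z') \<Rightarrow>
      (x + x', y + y', z + z' + 2 * (y * x' - x * y')))"

definition Cm_fun :: "nat \<Rightarrow> (real \<Rightarrow> real) \<Rightarrow> bool" where
  "Cm_fun m f \<longleftrightarrow>
     (\<forall>k<m. \<forall>x. ((deriv ^^ k) f has_real_derivative (deriv ^^ Suc k) f x) (at x))
     \<and> continuous_on UNIV ((deriv ^^ m) f)
     \<and> bounded (range ((deriv ^^ m) f))"

definition Cm_curve :: "nat \<Rightarrow> (real \<Rightarrow> real \<times> real \<times> real) \<Rightarrow> bool" where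
  "Cm_curve m \<gamma> \<longleftrightarrow> Cm_fun m (\<lambda>t. fst (\<gamma> t)) \<and> Cm_fun m (\<lambda>t. fst (snd (\<gamma> t)))
     \<and> Cm_fun m (\<lambda>t. snd (snd (\<gamma> t)))"

definition taylor :: "nat \<Rightarrow> (real \<Rightarrow> real) \<Rightarrow> real \<Rightarrow> real \<Rightarrow> real" where
  "taylor m f a x = (\<Sum>k\<le>m. (deriv ^^ k) f a / fact k * (x - a) ^ k)"

definition oint :: "(real \<Rightarrow> real) \<Rightarrow> real \<Rightarrow> real \<Rightarrow> real" where
  "oint F a b = (if a \<le> b then integral {a..b} F else - integral {b..a} F)"

definition Aq :: "nat \<Rightarrow> (real \<Rightarrow> real \<times> real \<times> real) \<Rightarrow> real \<Rightarrow> real \<Rightarrow> real" where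
  "Aq m \<gamma> a b =
    (let f = (\<lambda>t. fst (\<gamma> t)); g = (\<lambda>t. fst (snd (\<gamma> t))); h = (\<lambda>t. snd (snd (\<gamma> t)));
         Tf = taylor m f a; Tg = taylor m g a
     in h b - h a
        - 2 * oint (\<lambda>t. deriv Tf t * Tg t - deriv Tg t * Tf t) a b
        + 2 * f a * (g b - Tg b) - 2 * g a * (f b - Tf b))"

definition Vq :: "nat \<Rightarrow> (real \<Rightarrow> real \<times> real \<times> real) \<Rightarrow> real \<Rightarrow> real \<Rightarrow> real" where
  "Vq m \<gamma> a b =
    (let f = (\<lambda>t. fst (\<gamma> t)); g = (\<lambda>t. fst (snd (\<gamma> t)));
         Tf = taylor m f a; Tg = taylor m g a
     in (b - a) ^ (2 * m) + (b - a) ^ m * oint (\<lambda>t. \<bar>deriv Tf t\<bar> + \<bar>deriv Tg t\<bar>) a b)"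

end

theory Submission
  imports Defs
begin

text \<open>Left translation by \<open>p = (x\<^sub>0, y\<^sub>0, z\<^sub>0)\<close> adds the constants \<open>x\<^sub>0, y\<^sub>0\<close> to
  \<open>f, g\<close> and the linear term \<open>2 (y\<^sub>0 f - x\<^sub>0 g)\<close> to \<open>h\<close>. Adding a constant shifts a Taylor
  polynomial by that constant and leaves its derivative unchanged, so \<open>V\<close> is untouched.
  In \<open>A\<close> the area integral acquires \<open>2 \<integral>(y\<^sub>0 T\<^sub>af' - x\<^sub>0 T\<^sub>ag')\<close>, which by the fundamental theorem
  of calculus equals \<open>2 y\<^sub>0 (T\<^sub>af(b) - f(a)) - 2 x\<^sub>0 (T\<^sub>ag(b) - g(a))\<close>; together with the new
  boundary terms this cancels the increment of \<open>h(b) - h(a)\<close> exactly. No regularity of the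
  curve is needed: Taylor polynomials are polynomials whatever the derivatives of \<open>\<gamma>\<close> are.\<close>

lemma heis_mult_eq:
  "heis_mult (x\<^sub>0, y\<^sub>0, z\<^sub>0) q =
     (x\<^sub>0 + fst q, y\<^sub>0 + fst (snd q), z\<^sub>0 + snd (snd q) + 2 * (y\<^sub>0 * fst q - x\<^sub>0 * fst (snd q)))"
  by (cases q) (simp add: heis_mult_def)

lemma deriv_const_add: "deriv (\<lambda>t. c + f t) = deriv (f :: real \<Rightarrow> real)"
  unfolding deriv_def has_real_derivative_iff_has_vector_derivative
  using has_vector_derivative_add_const[of f c] by (simp add: add.commute)

lemma higher_deriv_const_add:
  "(deriv ^^ Suc k) (\<lambda>t. c + f t) = (deriv ^^ Suc k) (f :: real \<Rightarrow> real)"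
  by (simp only: funpow_Suc_right comp_def deriv_const_add)

lemma taylor_eq_constant_term:
  "taylor m f a x = f a + (\<Sum>k<m. (deriv ^^ Suc k) f a / fact (Suc k) * (x - a) ^ Suc k)"
  unfolding taylor_def by (simp add: sum.atMost_shift)

lemma taylor_const_add: "taylor m (\<lambda>t. c + f t) a = (\<lambda>x. c + taylor m f a x)"
  by (rule ext) (simp only: taylor_eq_constant_term higher_deriv_const_add add.assoc)

lemma taylor_at_center: "taylor m f a a = f a"
  by (simp add: taylor_eq_constant_term)

lemma taylor_has_derivative:
  "(taylor m f a has_real_derivative
     (\<Sum>k\<le>m. (deriv ^^ k) f a / fact k * (of_nat k * (x - a) ^ (k - 1)))) (at x)"
  unfolding taylor_def by (auto intro!: derivative_eq_intros sum.cong simp: field_simps)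

lemma deriv_taylor:
  "deriv (taylor m f a) = (\<lambda>x. \<Sum>k\<le>m. (deriv ^^ k) f a / fact k * (of_nat k * (x - a) ^ (k - 1)))"
  using taylor_has_derivative DERIV_imp_deriv by blast

lemma taylor_has_deriv: "(taylor m f a has_real_derivative deriv (taylor m f a) x) (at x)"
  unfolding deriv_taylor by (rule taylor_has_derivative)

lemma continuous_on_deriv_taylor: "continuous_on UNIV (deriv (taylor m f a))"
  unfolding deriv_taylor by (intro continuous_intros)

lemma oint_fundamental_theorem:
  assumes "\<And>x. (P has_real_derivative P' x) (at x)"
  shows "oint P' a b = P b - P a"
proof -
  have "integral {u..v} P' = P v - P u" if "u \<le> v" for u v
    using that assms
    by (intro integral_unique fundamental_theorem_of_calculus)
       (auto intro: has_field_derivative_at_within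
             simp: has_real_derivative_iff_has_vector_derivative[symmetric])
  then show ?thesis
    unfolding oint_def by simp
qed

lemma oint_add:
  assumes "continuous_on UNIV F" "continuous_on UNIV G"
  shows "oint (\<lambda>t. F t + G t) a b = oint F a b + oint G a b"
proof -
  have "F integrable_on {u..v}" "G integrable_on {u..v}" for u v
    using assms by (auto intro: integrable_continuous_real continuous_on_subset)
  then show ?thesis
    unfolding oint_def by (simp add: integral_add)
qed

lemma oint_mult_left: "oint (\<lambda>t. c * F t) a b = c * oint F a b"
  unfolding oint_def by simp

lemma oint_area_const_add:
  assumes P: "\<And>t. (P has_real_derivative P' t) (at t)" "continuous_on UNIV P'"
    and Q: "\<And>t. (Q has_real_derivative Q' t) (at t)" "continuous_on UNIV Q'"
  shows "oint (\<lambda>t. P' t * (y\<^sub>0 + Q t) - Q' t * (x\<^sub>0 + P t)) a b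
       = oint (\<lambda>t. P' t * Q t - Q' t * P t) a b + y\<^sub>0 * (P b - P a) - x\<^sub>0 * (Q b - Q a)"
proof -
  have "continuous_on UNIV P" "continuous_on UNIV Q"
    using P(1) Q(1) by (auto intro: continuous_at_imp_continuous_on DERIV_isCont)
  then have area: "continuous_on UNIV (\<lambda>t. P' t * Q t - Q' t * P t)"
    using P(2) Q(2) by (intro continuous_intros)
  have linear: "continuous_on UNIV (\<lambda>t. y\<^sub>0 * P' t)" "continuous_on UNIV (\<lambda>t. (- x\<^sub>0) * Q' t)"
    using continuous_on_mult_left P(2) Q(2) by blast+
  have split: "(\<lambda>t. P' t * (y\<^sub>0 + Q t) - Q' t * (x\<^sub>0 + P t))
      = (\<lambda>t. (P' t * Q t - Q' t * P t) + (y\<^sub>0 * P' t + (- x\<^sub>0) * Q' t))"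
    by (auto simp: algebra_simps)
  show ?thesis
    unfolding split oint_add[OF area continuous_on_add[OF linear]] oint_add[OF linear] oint_mult_left
      oint_fundamental_theorem[OF P(1)] oint_fundamental_theorem[OF Q(1)]
    by simp
qed

lemma Vq_heis_mult_left: "Vq m (\<lambda>t. heis_mult p (\<gamma> t)) a b = Vq m \<gamma> a b"
  by (cases p) (simp add: Vq_def heis_mult_eq taylor_const_add deriv_const_add)

lemma Aq_heis_mult_left: "Aq m (\<lambda>t. heis_mult p (\<gamma> t)) a b = Aq m \<gamma> a b"
proof -
  obtain x\<^sub>0 y\<^sub>0 z\<^sub>0 where p: "p = (x\<^sub>0, y\<^sub>0, z\<^sub>0)" by (cases p)
  define f where "f = (\<lambda>t. fst (\<gamma> t))"
  define g where "g = (\<lambda>t. fst (snd (\<gamma> t)))"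
  define Tf where "Tf = taylor m f a"
  define Tg where "Tg = taylor m g a"
  have area: "oint (\<lambda>t. deriv Tf t * (y\<^sub>0 + Tg t) - deriv Tg t * (x\<^sub>0 + Tf t)) a b
      = oint (\<lambda>t. deriv Tf t * Tg t - deriv Tg t * Tf t) a b
        + y\<^sub>0 * (Tf b - f a) - x\<^sub>0 * (Tg b - g a)"
    unfolding Tf_def Tg_def
    by (subst oint_area_const_add) (auto intro: taylor_has_deriv continuous_on_deriv_taylor
        simp: taylor_at_center)
  show ?thesis
    unfolding Aq_def Let_def p heis_mult_eq fst_conv snd_conv
      taylor_const_add deriv_const_add f_def[symmetric] g_def[symmetric]
      Tf_def[symmetric] Tg_def[symmetric] area
    by (simp add: algebra_simps f_def g_def)
qed

theorem lemma3p3: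
  fixes m :: nat and \<gamma> :: "real \<Rightarrow> real \<times> real \<times> real"
    and p :: "real \<times> real \<times> real" and a b :: real
  assumes "m \<ge> 1" and "Cm_curve m \<gamma>"
  shows "Aq m (\<lambda>t. heis_mult p (\<gamma> t)) a b = Aq m \<gamma> a b
       \<and> Vq m (\<lambda>t. heis_mult p (\<gamma> t)) a b = Vq m \<gamma> a b"
  using Aq_heis_mult_left Vq_heis_mult_left by blast

end
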